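(* Let $r$ be a right reflection point of $\mathrm{OPT}$ with incident legs $\ell,\ell'$, where $\ell$ is above $\ell'$. Let $P_1$ and $P_2$ be subpaths of $\mathrm{OPT}$, both starting at $r$ and both of shadow $1$, with $\ell\in P_1$ and $\ell'\in P_2$. If there is a vertical line $\Gamma$ with $x(\Gamma)>x(r)$ crossing both $P_1$ and $P_2$, then $P_1$ is above $P_2$ in the range $[x(r),x(\Gamma)]$.
   Context: Instance: vertical line segments $s_1,\dots,s_n$ in $\mathbb{R}^2$, each of length $1$, with pairwise distinct $x$-coordinates. A tour is a cyclic sequence of points $p_1,\dots,p_\sigma$, each on some segment, with every segment containing at least one $p_j$; the straight segments joining consecutive points are legs. $\mathrm{OPT}$ is a fixed minimum-cost tour, oriented, with no two consecutive points on the same segment (no vertical legs) and not self-crossing. A point $p_j$ of $\mathrm{OPT}$ on segment $s$ is a right reflection point if both of its incident legs lie in the half-plane $x\ge x(s)$. A leg $\ell$ incident to a reflection point is above the other incident leg $\ell'$ if (apart from their common point) all points of $\ell$ have larger $y$-coordinate than all points of $\ell'$. Shadow of a path: the maximum, over vertical lines, of the number of its legs intersecting the line. A path $P_1$ is above a path $P_2$ in a range $I=[x_0,x_1]$ if for every vertical line $\Gamma'$ with $x(\Gamma')\in I$, the top-most intersection point of $\Gamma'$ with $P_1\cup P_2$ lies on $P_1$. *)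

theory Defs
  imports "HOL-Analysis.Analysis"
begin

type_synonym rpt = "real \<times> real"

definition seg :: "(nat \<Rightarrow> rpt) \<Rightarrow> nat \<Rightarrow> rpt set" where
  "seg base i = closed_segment (base i) (base i + (0::real, 1::real))"

definition valid_instance :: "nat \<Rightarrow> (nat \<Rightarrow> rpt) \<Rightarrow> bool" where
  "valid_instance n base \<longleftrightarrow> inj_on (\<lambda>i. fst (base i)) {..<n}"

definition is_tour :: "nat \<Rightarrow> (nat \<Rightarrow> rpt) \<Rightarrow> rpt list \<Rightarrow> bool" where
  "is_tour n base ps \<longleftrightarrow> ps \<noteq> [] \<and>
     (\<forall>p \<in> set ps. \<exists>i<n. p \<in> seg base i) \<and>
     (\<forall>i<n. \<exists>p \<in> set ps. p \<in> seg base i)"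

definition cidx :: "nat \<Rightarrow> nat \<Rightarrow> int \<Rightarrow> nat" where
  "cidx \<sigma> j d = nat ((int j + d) mod int \<sigma>)"

definition tour_cost :: "rpt list \<Rightarrow> real" where
  "tour_cost ps = (\<Sum>j<length ps. dist (ps ! j) (ps ! cidx (length ps) j 1))"

definition tour_curve :: "rpt list \<Rightarrow> real \<Rightarrow> rpt" where
  "tour_curve ps t =
     (let \<sigma> = length ps; u = frac t * real \<sigma>; j = nat \<lfloor>u\<rfloor>; s = u - of_int \<lfloor>u\<rfloor>
      in (1 - s) *\<^sub>R (ps ! j) + s *\<^sub>R (ps ! cidx \<sigma> j 1))"

text \<open>Not self-crossing (weakly simple): the closed tour is a uniform limit of simple closed curves.\<close>
definition not_self_crossing :: "rpt list \<Rightarrow> bool" where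
  "not_self_crossing ps \<longleftrightarrow>
     (\<forall>\<epsilon>>0. \<exists>\<gamma>::real \<Rightarrow> rpt. continuous_on UNIV \<gamma> \<and> (\<forall>t. \<gamma> (t + 1) = \<gamma> t) \<and>
        inj_on \<gamma> {0..<1} \<and> (\<forall>t. dist (\<gamma> t) (tour_curve ps t) < \<epsilon>))"

definition is_OPT :: "nat \<Rightarrow> (nat \<Rightarrow> rpt) \<Rightarrow> rpt list \<Rightarrow> bool" where
  "is_OPT n base ps \<longleftrightarrow>
     is_tour n base ps \<and>
     (\<forall>qs. is_tour n base qs \<longrightarrow> tour_cost ps \<le> tour_cost qs) \<and>
     (\<forall>j<length ps. \<not> (\<exists>i<n. ps ! j \<in> seg base i \<and> ps ! cidx (length ps) j 1 \<in> seg base i)) \<and>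
     not_self_crossing ps"

definition tour_subpath :: "rpt list \<Rightarrow> nat \<Rightarrow> bool \<Rightarrow> nat \<Rightarrow> rpt list" where
  "tour_subpath ps j fwd k =
     map (\<lambda>i. ps ! cidx (length ps) j (if fwd then int i else - int i)) [0..<Suc k]"

definition path_pts :: "rpt list \<Rightarrow> rpt set" where
  "path_pts qs = (\<Union>i < length qs - 1. closed_segment (qs ! i) (qs ! Suc i))"

definition legs_on_line :: "rpt list \<Rightarrow> real \<Rightarrow> nat" where
  "legs_on_line qs c =
     card {i. i < length qs - 1 \<and> (\<exists>p \<in> open_segment (qs ! i) (qs ! Suc i). fst p = c)}"

definition shadow :: "rpt list \<Rightarrow> nat" where
  "shadow qs = Max (range (legs_on_line qs))"

definition path_above :: "rpt list \<Rightarrow> rpt list \<Rightarrow> real \<Rightarrow> real \<Rightarrow> bool" where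
  "path_above P1 P2 x0 x1 \<longleftrightarrow>
     (\<forall>c \<in> {x0..x1}. \<exists>p \<in> path_pts P1. fst p = c \<and>
        (\<forall>q \<in> path_pts P1 \<union> path_pts P2. fst q = c \<longrightarrow> snd q \<le> snd p))"

definition leg_above :: "rpt \<Rightarrow> rpt \<Rightarrow> rpt \<Rightarrow> bool" where
  "leg_above r a b \<longleftrightarrow>
     (\<forall>p \<in> closed_segment r a - {r}. \<forall>q \<in> closed_segment r b - {r}. snd p > snd q)"

definition right_reflection :: "rpt list \<Rightarrow> nat \<Rightarrow> bool" where
  "right_reflection ps j \<longleftrightarrow> j < length ps \<and>
     closed_segment (ps ! j) (ps ! cidx (length ps) j 1) \<subseteq> {p. fst p \<ge> fst (ps ! j)} \<and>
     closed_segment (ps ! j) (ps ! cidx (length ps) j (-1)) \<subseteq> {p. fst p \<ge> fst (ps ! j)}"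

end

theory Submission
  imports Defs "HOL-Library.Periodic_Fun"
begin

(* Both subpaths have shadow 1 and leave r to the right, so they are x-monotone polylines:
   graphs of Lipschitz functions over their x-ranges. Right of r, near r, P1 is above P2
   because l is above l'. Suppose P2 were above P1 at some larger abscissa b. Since OPT is
   not self-crossing, for every eps there is a simple closed curve eps-close to OPT; its two
   arcs shadowing P1 and P2 between a point a near r and b are disjoint, because the two
   subpaths are disjoint stretches of the tour (monotonicity keeps them from overlapping).
   These arcs swap their vertical order between a and b; extending one by horizontal rays and
   the other by vertical rays, Fashoda's theorem makes them meet, a contradiction. *)

section \<open>Lipschitz graphs and x-monotone polylines\<close>

lemma fst_image_closed_segment:
  fixes u w :: rpt
  shows "fst ` closed_segment u w = closed_segment (fst u) (fst w)"
  by (simp add: closed_segment_linear_image linear_fst)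

lemma fst_closed_segment_bounds:
  fixes u w :: rpt
  assumes "p \<in> closed_segment u w" "fst u \<le> fst w"
  shows "fst u \<le> fst p \<and> fst p \<le> fst w"
proof -
  have "fst p \<in> closed_segment (fst u) (fst w)"
    using assms(1) fst_image_closed_segment by blast
  then show ?thesis using assms(2) by (simp add: closed_segment_eq_real_ivl1)
qed

lemma closed_segment_fst_covers:
  fixes u w :: rpt
  shows "fst u \<le> x \<Longrightarrow> x \<le> fst w \<Longrightarrow> x \<in> fst ` closed_segment u w"
  by (simp add: fst_image_closed_segment closed_segment_eq_real_ivl1)

lemma open_segment_point_at_fst:
  fixes u w :: rpt
  shows "x \<in> open_segment (fst u) (fst w) \<Longrightarrow> \<exists>p\<in>open_segment u w. fst p = x"
  using fst_image_closed_segment[of u w] by (force simp: open_segment_def)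

lemma horizontal_segment:
  fixes u w :: rpt
  assumes "z \<in> closed_segment u w" "snd u = snd w"
  shows "snd z = snd u \<and> fst z \<in> closed_segment (fst u) (fst w)"
proof -
  have "snd z \<in> closed_segment (snd u) (snd w)" "fst z \<in> closed_segment (fst u) (fst w)"
    using assms(1) closed_segment_linear_image[OF linear_snd] closed_segment_linear_image[OF linear_fst]
    by blast+
  then show ?thesis using assms(2) by simp
qed

lemma vertical_segment:
  fixes u w :: rpt
  assumes "z \<in> closed_segment u w" "fst u = fst w"
  shows "fst z = fst u \<and> snd z \<in> closed_segment (snd u) (snd w)"
proof -
  have "snd z \<in> closed_segment (snd u) (snd w)" "fst z \<in> closed_segment (fst u) (fst w)"
    using assms(1) closed_segment_linear_image[OF linear_snd] closed_segment_linear_image[OF linear_fst]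
    by blast+
  then show ?thesis using assms(2) by simp
qed

definition lipschitz_graph :: "real \<Rightarrow> rpt set \<Rightarrow> bool" where
  "lipschitz_graph K S \<longleftrightarrow> (\<forall>p\<in>S. \<forall>q\<in>S. \<bar>snd p - snd q\<bar> \<le> K * \<bar>fst p - fst q\<bar>)"

lemma lipschitz_graph_mono:
  assumes "lipschitz_graph L S" "L \<le> K"
  shows "lipschitz_graph K S"
  unfolding lipschitz_graph_def
proof (intro ballI)
  fix p q assume "p \<in> S" "q \<in> S"
  then have "\<bar>snd p - snd q\<bar> \<le> L * \<bar>fst p - fst q\<bar>"
    using assms(1) unfolding lipschitz_graph_def by blast
  also have "\<dots> \<le> K * \<bar>fst p - fst q\<bar>" using assms(2) by (simp add: mult_right_mono)
  finally show "\<bar>snd p - snd q\<bar> \<le> K * \<bar>fst p - fst q\<bar>" .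
qed

lemma lipschitz_graph_inj_on_fst:
  assumes "lipschitz_graph K S"
  shows "inj_on fst S"
proof (rule inj_onI)
  fix p q assume "p \<in> S" "q \<in> S" "fst p = fst q"
  then have "\<bar>snd p - snd q\<bar> \<le> 0" using assms unfolding lipschitz_graph_def by fastforce
  then show "p = q" using \<open>fst p = fst q\<close> by (simp add: prod_eq_iff)
qed

lemma lipschitz_graph_closed_segment:
  fixes u w :: rpt
  assumes "fst u < fst w" "\<bar>snd w - snd u\<bar> / (fst w - fst u) \<le> K"
  shows "lipschitz_graph K (closed_segment u w)"
  unfolding lipschitz_graph_def
proof (intro ballI)
  fix p q assume "p \<in> closed_segment u w" "q \<in> closed_segment u w"
  then obtain s t where s: "0 \<le> s" "s \<le> 1" "p = (1 - s) *\<^sub>R u + s *\<^sub>R w"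
    and t: "0 \<le> t" "t \<le> 1" "q = (1 - t) *\<^sub>R u + t *\<^sub>R w"
    unfolding closed_segment_def by auto
  have dx: "fst p - fst q = (s - t) * (fst w - fst u)" and dy: "snd p - snd q = (s - t) * (snd w - snd u)"
    by (simp_all add: s(3) t(3) algebra_simps)
  have "\<bar>snd p - snd q\<bar> = \<bar>s - t\<bar> * (fst w - fst u) * (\<bar>snd w - snd u\<bar> / (fst w - fst u))"
    using assms(1) by (simp add: dy abs_mult)
  also have "\<dots> \<le> \<bar>s - t\<bar> * (fst w - fst u) * K"
    using assms by (intro mult_left_mono) auto
  also have "\<dots> = K * \<bar>fst p - fst q\<bar>"
    using assms(1) by (simp add: dx abs_mult)
  finally show "\<bar>snd p - snd q\<bar> \<le> K * \<bar>fst p - fst q\<bar>" .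
qed

lemma lipschitz_graph_Un:
  assumes "lipschitz_graph K S" "lipschitz_graph K T" "0 \<le> K" "z \<in> S" "z \<in> T"
    and "\<forall>p\<in>S. fst p \<le> fst z" "\<forall>q\<in>T. fst z \<le> fst q"
  shows "lipschitz_graph K (S \<union> T)"
proof -
  have across: "\<bar>snd p - snd q\<bar> \<le> K * \<bar>fst p - fst q\<bar>" if "p \<in> S" "q \<in> T" for p q
  proof -
    have "\<bar>snd p - snd q\<bar> \<le> \<bar>snd p - snd z\<bar> + \<bar>snd z - snd q\<bar>" by simp
    also have "\<dots> \<le> K * \<bar>fst p - fst z\<bar> + K * \<bar>fst z - fst q\<bar>"
      using assms(1,2,4,5) that unfolding lipschitz_graph_def by (meson add_mono)
    also have "\<dots> = K * \<bar>fst p - fst q\<bar>"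
    proof -
      have "fst p \<le> fst z" "fst z \<le> fst q" using assms(6,7) that by auto
      then have "\<bar>fst p - fst z\<bar> + \<bar>fst z - fst q\<bar> = \<bar>fst p - fst q\<bar>" by arith
      then show ?thesis by (metis distrib_left)
    qed
    finally show ?thesis .
  qed
  show ?thesis
    unfolding lipschitz_graph_def
  proof (intro ballI)
    fix p q assume "p \<in> S \<union> T" "q \<in> S \<union> T"
    then show "\<bar>snd p - snd q\<bar> \<le> K * \<bar>fst p - fst q\<bar>"
      using assms(1,2) across[of p q] across[of q p]
      unfolding lipschitz_graph_def by (auto simp: abs_minus_commute)
  qed
qed

lemma lipschitz_graph_snd_near:
  assumes "lipschitz_graph K S" "0 \<le> K" "w \<in> S" "p \<in> S" "dist z w < \<epsilon>" "\<bar>fst z - fst p\<bar> < \<epsilon>"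
  shows "\<bar>snd z - snd p\<bar> < (2 * K + 1) * \<epsilon>"
proof -
  have z: "\<bar>fst z - fst w\<bar> < \<epsilon>" "\<bar>snd z - snd w\<bar> < \<epsilon>"
    using assms(5) dist_fst_le[of z w] dist_snd_le[of z w] by (simp_all add: dist_real_def)
  have "\<bar>snd w - snd p\<bar> \<le> K * \<bar>fst w - fst p\<bar>"
    using assms(1,3,4) unfolding lipschitz_graph_def by blast
  also have "\<dots> \<le> K * (2 * \<epsilon>)"
    using z(1) assms(2,6) by (intro mult_left_mono) auto
  finally show ?thesis using z(2) by (simp add: algebra_simps)
qed

definition polyline_points :: "(nat \<Rightarrow> rpt) \<Rightarrow> nat \<Rightarrow> rpt set" where
  "polyline_points v k = (\<Union>i<k. closed_segment (v i) (v (Suc i)))"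

lemma polyline_points_Suc:
  "polyline_points v (Suc k) = polyline_points v k \<union> closed_segment (v k) (v (Suc k))"
  by (auto simp: polyline_points_def lessThan_Suc)

locale x_monotone_polyline =
  fixes v :: "nat \<Rightarrow> rpt" and k :: nat
  assumes legs: "0 < k" and fst_less: "\<And>i. i < k \<Longrightarrow> fst (v i) < fst (v (Suc i))"
begin

lemma fst_mono: "i \<le> i' \<Longrightarrow> i' \<le> k \<Longrightarrow> fst (v i) \<le> fst (v i')"
proof (induction i' rule: dec_induct)
  case (step m)
  then show ?case using fst_less[of m] by simp
qed simp

lemma fst_points_bounds:
  assumes "p \<in> polyline_points v n" "n \<le> k"
  shows "fst (v 0) \<le> fst p \<and> fst p \<le> fst (v n)"
proof -
  obtain i where i: "i < n" "p \<in> closed_segment (v i) (v (Suc i))"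
    using assms(1) by (auto simp: polyline_points_def)
  have "fst (v i) \<le> fst p \<and> fst p \<le> fst (v (Suc i))"
    using fst_closed_segment_bounds[OF i(2)] fst_less[of i] i assms(2) by simp
  moreover have "fst (v 0) \<le> fst (v i)" "fst (v (Suc i)) \<le> fst (v n)"
    using fst_mono i assms(2) by auto
  ultimately show ?thesis by linarith
qed

definition slope_bound :: real where
  "slope_bound = (\<Sum>i<k. \<bar>snd (v (Suc i)) - snd (v i)\<bar> / (fst (v (Suc i)) - fst (v i)))"

lemma slope_bound_nonneg: "0 \<le> slope_bound"
  unfolding slope_bound_def by (rule sum_nonneg) (use fst_less in \<open>auto intro!: divide_nonneg_pos\<close>)

lemma lipschitz_graph_points: "lipschitz_graph slope_bound (polyline_points v k)"
proof -
  have "lipschitz_graph slope_bound (polyline_points v n)" if "n \<le> k" for n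
    using that
  proof (induction n)
    case 0
    then show ?case by (simp add: polyline_points_def lipschitz_graph_def)
  next
    case (Suc n)
    have "\<bar>snd (v (Suc n)) - snd (v n)\<bar> / (fst (v (Suc n)) - fst (v n)) \<le> slope_bound"
      unfolding slope_bound_def using Suc.prems
      by (intro member_le_sum) (use fst_less in \<open>auto intro!: divide_nonneg_pos\<close>)
    then have leg: "lipschitz_graph slope_bound (closed_segment (v n) (v (Suc n)))"
      using Suc.prems by (intro lipschitz_graph_closed_segment fst_less) auto
    show ?case
    proof (cases n)
      case 0
      then show ?thesis using leg by (simp add: polyline_points_def lessThan_Suc)
    next
      case (Suc m)
      have "v n \<in> polyline_points v n"
        using Suc by (auto simp: polyline_points_def intro!: bexI[of _ m])
      moreover have "\<forall>q\<in>closed_segment (v n) (v (Suc n)). fst (v n) \<le> fst q"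
        using fst_closed_segment_bounds fst_less \<open>Suc n \<le> k\<close> by (metis Suc_le_lessD less_le)
      ultimately show ?thesis
        unfolding polyline_points_Suc using Suc.IH Suc.prems fst_points_bounds leg slope_bound_nonneg
        by (intro lipschitz_graph_Un) auto
    qed
  qed
  then show ?thesis by simp
qed

lemma first_leg_subset_points: "closed_segment (v 0) (v 1) \<subseteq> polyline_points v k"
  using legs by (force simp: polyline_points_def)

lemma inj_on_fst_points: "inj_on fst (polyline_points v k)"
  by (rule lipschitz_graph_inj_on_fst[OF lipschitz_graph_points])

lemma fst_image_points: "fst ` polyline_points v k = {fst (v 0)..fst (v k)}"
proof
  show "fst ` polyline_points v k \<subseteq> {fst (v 0)..fst (v k)}"
    using fst_points_bounds by auto
  have "{fst (v 0)..fst (v n)} \<subseteq> fst ` polyline_points v n" if "0 < n" "n \<le> k" for n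
    using that
  proof (induction n)
    case (Suc n)
    have "{fst (v n)..fst (v (Suc n))} \<subseteq> fst ` closed_segment (v n) (v (Suc n))"
      by (auto intro: closed_segment_fst_covers)
    then have leg: "{fst (v n)..fst (v (Suc n))} \<subseteq> fst ` polyline_points v (Suc n)"
      by (auto simp: polyline_points_Suc)
    show ?case
    proof (cases n)
      case 0
      then show ?thesis using leg by simp
    next
      case (Suc m)
      then have "{fst (v 0)..fst (v n)} \<subseteq> fst ` polyline_points v (Suc n)"
        using Suc.IH Suc.prems by (auto simp: polyline_points_Suc)
      moreover have "{fst (v 0)..fst (v (Suc n))} \<subseteq> {fst (v 0)..fst (v n)} \<union> {fst (v n)..fst (v (Suc n))}"
        by auto
      ultimately show ?thesis using leg by blast
    qed
  qed simp
  then show "{fst (v 0)..fst (v k)} \<subseteq> fst ` polyline_points v k" using legs by simp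
qed

end

text \<open>A polyline turning back would have two consecutive legs crossed by one vertical line.\<close>
lemma single_crossing_polyline_fst_less:
  fixes v :: "nat \<Rightarrow> rpt"
  assumes crossing: "\<And>c. card {i. i < k \<and> (\<exists>p\<in>open_segment (v i) (v (Suc i)). fst p = c)} \<le> 1"
    and not_vertical: "\<And>i. fst (v i) \<noteq> fst (v (Suc i))"
    and first: "fst (v 0) < fst (v 1)"
  shows "i < k \<Longrightarrow> fst (v i) < fst (v (Suc i))"
proof (induction i)
  case 0
  then show ?case using first by simp
next
  case (Suc i)
  then have up: "fst (v i) < fst (v (Suc i))" by simp
  show ?case
  proof (rule ccontr)
    assume "\<not> fst (v (Suc i)) < fst (v (Suc (Suc i)))"
    then have down: "fst (v (Suc (Suc i))) < fst (v (Suc i))" using not_vertical[of "Suc i"] by linarith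
    define c where "c = (max (fst (v i)) (fst (v (Suc (Suc i)))) + fst (v (Suc i))) / 2"
    have "c \<in> open_segment (fst (v i)) (fst (v (Suc i)))"
      "c \<in> open_segment (fst (v (Suc i))) (fst (v (Suc (Suc i))))"
      using up down by (auto simp: open_segment_eq_real_ivl c_def)
    then have "\<exists>p\<in>open_segment (v i) (v (Suc i)). fst p = c"
      "\<exists>p\<in>open_segment (v (Suc i)) (v (Suc (Suc i))). fst p = c"
      by (simp_all add: open_segment_point_at_fst)
    then have "{i, Suc i} \<subseteq> {i. i < k \<and> (\<exists>p\<in>open_segment (v i) (v (Suc i)). fst p = c)}"
      using Suc.prems by auto
    then have "card {i, Suc i} \<le> card {i. i < k \<and> (\<exists>p\<in>open_segment (v i) (v (Suc i)). fst p = c)}"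
      by (intro card_mono) auto
    then show False using crossing[of c] by simp
  qed
qed

lemma approximating_path:
  fixes \<gamma> f :: "real \<Rightarrow> rpt" and T :: "real \<Rightarrow> real"
  assumes "continuous_on UNIV \<gamma>" "continuous_on UNIV T" "\<alpha> \<le> \<beta>"
    and "\<And>t. dist (\<gamma> t) (f t) < \<epsilon>"
  shows "path (\<gamma> \<circ> T \<circ> linepath \<alpha> \<beta>)" "path_image (\<gamma> \<circ> T \<circ> linepath \<alpha> \<beta>) = (\<gamma> \<circ> T) ` {\<alpha>..\<beta>}"
    "dist (pathstart (\<gamma> \<circ> T \<circ> linepath \<alpha> \<beta>)) (f (T \<alpha>)) < \<epsilon>"
    "dist (pathfinish (\<gamma> \<circ> T \<circ> linepath \<alpha> \<beta>)) (f (T \<beta>)) < \<epsilon>"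
proof -
  have "continuous_on UNIV (\<gamma> \<circ> T)"
    by (rule continuous_on_compose[OF assms(2) continuous_on_subset[OF assms(1)]]) simp
  then show "path (\<gamma> \<circ> T \<circ> linepath \<alpha> \<beta>)"
    by (rule path_continuous_image[OF path_linepath continuous_on_subset]) simp
  show "path_image (\<gamma> \<circ> T \<circ> linepath \<alpha> \<beta>) = (\<gamma> \<circ> T) ` {\<alpha>..\<beta>}"
    using assms(3) by (simp add: path_image_compose closed_segment_eq_real_ivl1)
  show "dist (pathstart (\<gamma> \<circ> T \<circ> linepath \<alpha> \<beta>)) (f (T \<alpha>)) < \<epsilon>"
    "dist (pathfinish (\<gamma> \<circ> T \<circ> linepath \<alpha> \<beta>)) (f (T \<beta>)) < \<epsilon>"
    using assms(4) by (simp_all add: pathstart_compose pathfinish_compose)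
qed

locale parametrised_x_monotone_polyline = x_monotone_polyline +
  fixes P :: "real \<Rightarrow> rpt"
  assumes P_leg: "\<And>i s. i < k \<Longrightarrow> 0 \<le> s \<Longrightarrow> s \<le> 1 \<Longrightarrow> P (real i + s) = (1 - s) *\<^sub>R v i + s *\<^sub>R v (Suc i)"
begin

lemma leg_parameter:
  assumes "0 \<le> \<tau>" "\<tau> \<le> real k"
  obtains i s where "i < k" "0 \<le> s" "s \<le> 1" "\<tau> = real i + s" "\<tau> < real k \<Longrightarrow> s < 1"
proof (cases "\<tau> < real k")
  case True
  define i where "i = nat \<lfloor>\<tau>\<rfloor>"
  have "real i \<le> \<tau>" "\<tau> < real i + 1" using assms(1) by (simp_all add: i_def)
  moreover have "i < k" using True \<open>real i \<le> \<tau>\<close> by linarith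
  ultimately show ?thesis by (intro that[of i "\<tau> - real i"]) auto
next
  case False
  then show ?thesis using assms legs by (intro that[of "k - 1" 1]) (auto simp: of_nat_diff)
qed

lemma P_0: "P 0 = v 0"
  using P_leg[of 0 0] legs by simp

lemma image_P: "P ` {0..real k} = polyline_points v k"
proof
  show "P ` {0..real k} \<subseteq> polyline_points v k"
  proof
    fix p assume "p \<in> P ` {0..real k}"
    then obtain \<tau> where "0 \<le> \<tau>" "\<tau> \<le> real k" "p = P \<tau>" by auto
    then obtain i s where "i < k" "0 \<le> s" "s \<le> 1" "p = (1 - s) *\<^sub>R v i + s *\<^sub>R v (Suc i)"
      using leg_parameter P_leg by metis
    then show "p \<in> polyline_points v k"
      unfolding polyline_points_def closed_segment_def by blast
  qed
  show "polyline_points v k \<subseteq> P ` {0..real k}"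
  proof
    fix p assume "p \<in> polyline_points v k"
    then obtain i s where "i < k" "0 \<le> s" "s \<le> 1" "p = (1 - s) *\<^sub>R v i + s *\<^sub>R v (Suc i)"
      unfolding polyline_points_def closed_segment_def by blast
    then show "p \<in> P ` {0..real k}"
      using P_leg by (intro image_eqI[of _ _ "real i + s"]) auto
  qed
qed

lemma fst_P_on_leg:
  "i < k \<Longrightarrow> 0 \<le> s \<Longrightarrow> s \<le> 1 \<Longrightarrow> fst (P (real i + s)) = fst (v i) + s * (fst (v (Suc i)) - fst (v i))"
  by (subst P_leg) (simp_all add: algebra_simps)

lemma strict_mono_on_fst_P: "strict_mono_on {0..real k} (\<lambda>\<tau>. fst (P \<tau>))"
proof (rule strict_mono_onI)
  fix \<tau> \<tau>' assume "\<tau> \<in> {0..real k}" "\<tau>' \<in> {0..real k}" "\<tau> < \<tau>'"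
  then obtain i s i' s' where leg: "i < k" "0 \<le> s" "s < 1" "\<tau> = real i + s"
    and leg': "i' < k" "0 \<le> s'" "s' \<le> 1" "\<tau>' = real i' + s'"
    using leg_parameter by (metis atLeastAtMost_iff order.strict_trans2)
  have x: "fst (P \<tau>) = fst (v i) + s * (fst (v (Suc i)) - fst (v i))"
    and x': "fst (P \<tau>') = fst (v i') + s' * (fst (v (Suc i')) - fst (v i'))"
    using fst_P_on_leg leg leg' by simp_all
  have d: "fst (v i) < fst (v (Suc i))" "fst (v i') < fst (v (Suc i'))"
    using fst_less leg leg' by auto
  consider "i = i'" | "i < i'"
    using leg leg' \<open>\<tau> < \<tau>'\<close> by linarith
  then show "fst (P \<tau>) < fst (P \<tau>')"
  proof cases
    case 1
    then have "s < s'" using leg leg' \<open>\<tau> < \<tau>'\<close> by simp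
    then show ?thesis using x x' d 1 by (simp add: mult_strict_right_mono)
  next
    case 2
    then have "fst (v (Suc i)) \<le> fst (v i')" using fst_mono leg' by simp
    moreover have "s * (fst (v (Suc i)) - fst (v i)) < fst (v (Suc i)) - fst (v i)"
      using leg d by simp
    moreover have "0 \<le> s' * (fst (v (Suc i')) - fst (v i'))" using leg' d by simp
    ultimately show ?thesis using x x' by linarith
  qed
qed

lemma subarc:
  assumes "p \<in> polyline_points v k" "q \<in> polyline_points v k" "fst p < fst q"
  obtains \<alpha> \<beta> where "0 \<le> \<alpha>" "\<alpha> < \<beta>" "\<beta> \<le> real k" "P \<alpha> = p" "P \<beta> = q"
    "\<And>\<tau>. \<tau> \<in> {\<alpha>..\<beta>} \<Longrightarrow> P \<tau> \<in> polyline_points v k \<and> fst p \<le> fst (P \<tau>) \<and> fst (P \<tau>) \<le> fst q"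
proof -
  obtain \<alpha> \<beta> where \<alpha>: "\<alpha> \<in> {0..real k}" "P \<alpha> = p" and \<beta>: "\<beta> \<in> {0..real k}" "P \<beta> = q"
    using assms(1,2) image_P by (metis imageE)
  note less = strict_mono_on_less[OF strict_mono_on_fst_P]
  have "\<alpha> < \<beta>" using less[OF \<alpha>(1) \<beta>(1)] \<alpha> \<beta> assms(3) by simp
  moreover have "P \<tau> \<in> polyline_points v k \<and> fst p \<le> fst (P \<tau>) \<and> fst (P \<tau>) \<le> fst q"
    if "\<tau> \<in> {\<alpha>..\<beta>}" for \<tau>
  proof -
    have \<tau>: "\<tau> \<in> {0..real k}" using that \<alpha>(1) \<beta>(1) by auto
    then show ?thesis
      using image_P less[OF \<tau> \<alpha>(1)] less[OF \<beta>(1) \<tau>] that \<alpha>(2) \<beta>(2) by force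
  qed
  ultimately show ?thesis using that \<alpha> \<beta> by auto
qed

lemma shadowing_subarc:
  fixes \<gamma> f :: "real \<Rightarrow> rpt" and T :: "real \<Rightarrow> real"
  assumes P: "P = f \<circ> T" and "continuous_on UNIV T" "continuous_on UNIV \<gamma>"
    and close: "\<And>t. dist (\<gamma> t) (f t) < \<epsilon>"
    and "p \<in> polyline_points v k" "q \<in> polyline_points v k" "fst (v 0) < fst p" "fst p < fst q"
  obtains \<alpha> \<beta> where "0 < \<alpha>" "\<alpha> < \<beta>" "\<beta> \<le> real k" "f (T \<beta>) = q"
    "path (\<gamma> \<circ> T \<circ> linepath \<alpha> \<beta>)" "path_image (\<gamma> \<circ> T \<circ> linepath \<alpha> \<beta>) = (\<gamma> \<circ> T) ` {\<alpha>..\<beta>}"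
    "\<forall>z\<in>path_image (\<gamma> \<circ> T \<circ> linepath \<alpha> \<beta>). \<exists>w\<in>polyline_points v k. fst p \<le> fst w \<and> fst w \<le> fst q \<and> dist z w < \<epsilon>"
    "dist (pathstart (\<gamma> \<circ> T \<circ> linepath \<alpha> \<beta>)) p < \<epsilon>" "dist (pathfinish (\<gamma> \<circ> T \<circ> linepath \<alpha> \<beta>)) q < \<epsilon>"
proof -
  obtain \<alpha> \<beta> where arc: "0 \<le> \<alpha>" "\<alpha> < \<beta>" "\<beta> \<le> real k" "P \<alpha> = p" "P \<beta> = q"
    and on_arc: "\<And>\<tau>. \<tau> \<in> {\<alpha>..\<beta>} \<Longrightarrow> P \<tau> \<in> polyline_points v k \<and> fst p \<le> fst (P \<tau>) \<and> fst (P \<tau>) \<le> fst q"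
    using subarc[OF assms(5,6,8)] by blast
  have "0 < \<alpha>"
    using strict_mono_on_less[OF strict_mono_on_fst_P, of 0 \<alpha>] P_0 arc assms(7) by auto
  note A = approximating_path[OF assms(3,2) less_imp_le[OF arc(2)] close]
  have "\<forall>z\<in>path_image (\<gamma> \<circ> T \<circ> linepath \<alpha> \<beta>). \<exists>w\<in>polyline_points v k. fst p \<le> fst w \<and> fst w \<le> fst q \<and> dist z w < \<epsilon>"
  proof
    fix z assume "z \<in> path_image (\<gamma> \<circ> T \<circ> linepath \<alpha> \<beta>)"
    then obtain \<tau> where "\<tau> \<in> {\<alpha>..\<beta>}" "z = \<gamma> (T \<tau>)" unfolding A(2) by auto
    then show "\<exists>w\<in>polyline_points v k. fst p \<le> fst w \<and> fst w \<le> fst q \<and> dist z w < \<epsilon>"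
      using on_arc[of \<tau>] close[of "T \<tau>"] P by auto
  qed
  moreover have "f (T \<beta>) = q" "dist (pathstart (\<gamma> \<circ> T \<circ> linepath \<alpha> \<beta>)) p < \<epsilon>"
    "dist (pathfinish (\<gamma> \<circ> T \<circ> linepath \<alpha> \<beta>)) q < \<epsilon>"
    using A(3,4) arc(4,5) unfolding P by auto
  ultimately show ?thesis
    using that[OF \<open>0 < \<alpha>\<close> arc(2,3) _ A(1,2)] by blast
qed

end

lemma opposite_parametrisations_length_le:
  assumes C1: "parametrised_x_monotone_polyline v1 k1 P1"
    and C2: "parametrised_x_monotone_polyline v2 k2 P2"
    and opposite: "\<And>\<tau>. P1 \<tau> = P2 (real L - \<tau>)" and "k1 \<le> L" "k2 \<le> L"
  shows "k1 + k2 \<le> L"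
proof (rule ccontr)
  assume "\<not> k1 + k2 \<le> L"
  then have overlap: "real L - real k2 < real k1" by linarith
  have "fst (P1 (real L - real k2)) < fst (P1 (real k1))"
    by (rule strict_mono_onD[OF parametrised_x_monotone_polyline.strict_mono_on_fst_P[OF C1]])
      (use overlap assms(5) in auto)
  moreover have "fst (P2 (real L - real k1)) < fst (P2 (real k2))"
    by (rule strict_mono_onD[OF parametrised_x_monotone_polyline.strict_mono_on_fst_P[OF C2]])
      (use overlap assms(4) in auto)
  ultimately show False using opposite[of "real L - real k2"] opposite[of "real k1"] by simp
qed

section \<open>Paths that swap their vertical order\<close>

lemma fashoda_prod:
  fixes f g :: "real \<Rightarrow> real \<times> real"
  assumes "path f" "path g" "path_image f \<subseteq> cbox a b" "path_image g \<subseteq> cbox a b"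
    and "fst (pathstart f) = fst a" "fst (pathfinish f) = fst b"
    and "snd (pathstart g) = snd a" "snd (pathfinish g) = snd b"
  shows "path_image f \<inter> path_image g \<noteq> {}"
proof -
  define h :: "real \<times> real \<Rightarrow> real^2" where "h z = (\<chi> i. if i = 1 then fst z else snd z)" for z
  have h_comp [simp]: "h z $ 1 = fst z" "h z $ 2 = snd z" for z by (simp_all add: h_def)
  have "continuous_on UNIV h"
    unfolding h_def
  proof (intro continuous_on_vec_lambda)
    fix i :: 2
    show "continuous_on UNIV (\<lambda>z. if i = 1 then fst z else snd z)"
      by (cases "i = 1") (auto intro: continuous_intros)
  qed
  then have paths: "path (h \<circ> f)" "path (h \<circ> g)"
    using assms(1,2) continuous_on_subset path_continuous_image by blast+
  have box: "h z \<in> cbox (h a) (h b) \<longleftrightarrow> z \<in> cbox a b" for z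
    by (cases a, cases b, cases z) (simp add: mem_box_cart forall_2)
  have "path_image (h \<circ> f) \<subseteq> cbox (h a) (h b)" "path_image (h \<circ> g) \<subseteq> cbox (h a) (h b)"
    using assms(3,4) box by (auto simp: path_image_compose)
  moreover have "pathstart (h \<circ> f) $ 1 = h a $ 1" "pathfinish (h \<circ> f) $ 1 = h b $ 1"
    "pathstart (h \<circ> g) $ 2 = h a $ 2" "pathfinish (h \<circ> g) $ 2 = h b $ 2"
    using assms(5-8) by (simp_all add: pathstart_compose pathfinish_compose)
  ultimately obtain z where "z \<in> path_image (h \<circ> f)" "z \<in> path_image (h \<circ> g)"
    using fashoda[OF paths] by blast
  then obtain p q where "p \<in> path_image f" "q \<in> path_image g" "h p = h q"
    by (auto simp: path_image_compose)
  then show ?thesis by (metis disjoint_iff h_comp prod_eqI)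
qed

text \<open>Extend A by horizontal rays, to the left of its start and to the right of its end, and B
  by vertical rays, downwards from its start and upwards from its end. The hypotheses say that
  each ray misses the other extended path, so Fashoda's theorem in a large box forces A and B
  to meet.\<close>
lemma crossing_paths_intersect:
  fixes A B :: "real \<Rightarrow> real \<times> real"
  assumes "path A" "path B"
    and left: "\<forall>q\<in>path_image B. fst q \<le> fst (pathstart A) \<longrightarrow> snd q < snd (pathstart A)"
    and "snd (pathstart B) < snd (pathstart A)" "fst (pathstart A) < fst (pathfinish B)"
    and right: "\<forall>q\<in>path_image B. fst (pathfinish A) \<le> fst q \<longrightarrow> snd (pathfinish A) < snd q"
    and "snd (pathfinish A) < snd (pathfinish B)" "fst (pathstart B) < fst (pathfinish A)"
    and below: "\<forall>p\<in>path_image A. fst p = fst (pathstart B) \<longrightarrow> snd (pathstart B) < snd p"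
    and above: "\<forall>p\<in>path_image A. fst p = fst (pathfinish B) \<longrightarrow> snd p < snd (pathfinish B)"
  shows "path_image A \<inter> path_image B \<noteq> {}"
proof
  assume disjoint: "path_image A \<inter> path_image B = {}"
  define a0 a1 b0 b1 where "a0 = pathstart A" "a1 = pathfinish A" "b0 = pathstart B" "b1 = pathfinish B"
  have ends: "a0 \<in> path_image A" "a1 \<in> path_image A" "b0 \<in> path_image B" "b1 \<in> path_image B"
    unfolding a0_a1_b0_b1_def by auto
  obtain c where c: "path_image A \<union> path_image B \<subseteq> cbox (- c) c"
    using bounded_subset_cbox_symmetric compact_imp_bounded compact_path_image assms(1,2) compact_Un
    by metis
  define f where "f = linepath (- fst c, snd a0) a0 +++ A +++ linepath a1 (fst c, snd a1)"
  define g where "g = linepath (fst b0, - snd c) b0 +++ B +++ linepath b1 (fst b1, snd c)"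
  have image_f: "path_image f = closed_segment (- fst c, snd a0) a0 \<union> path_image A \<union> closed_segment a1 (fst c, snd a1)"
    unfolding f_def a0_a1_b0_b1_def by (simp add: path_image_join Un_assoc)
  have image_g: "path_image g = closed_segment (fst b0, - snd c) b0 \<union> path_image B \<union> closed_segment b1 (fst b1, snd c)"
    unfolding g_def a0_a1_b0_b1_def by (simp add: path_image_join Un_assoc)
  have in_box: "z \<in> cbox (- c) c \<longleftrightarrow> - fst c \<le> fst z \<and> fst z \<le> fst c \<and> - snd c \<le> snd z \<and> snd z \<le> snd c" for z
    by (cases c, cases z) auto
  have ends_box: "a0 \<in> cbox (- c) c" "a1 \<in> cbox (- c) c" "b0 \<in> cbox (- c) c" "b1 \<in> cbox (- c) c"
    using ends c by auto
  have "(- fst c, snd a0) \<in> cbox (- c) c" "(fst c, snd a1) \<in> cbox (- c) c"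
    "(fst b0, - snd c) \<in> cbox (- c) c" "(fst b1, snd c) \<in> cbox (- c) c"
    using ends_box by (simp_all add: in_box)
  then have "path_image f \<subseteq> cbox (- c) c" "path_image g \<subseteq> cbox (- c) c"
    unfolding image_f image_g using c ends_box by (simp_all add: closed_segment_subset convex_box)
  then have "path_image f \<inter> path_image g \<noteq> {}"
    by (intro fashoda_prod) (auto simp: f_def g_def a0_a1_b0_b1_def assms(1,2))
  then obtain z where zf: "z \<in> path_image f" and zg: "z \<in> path_image g" by blast
  have "- fst c \<le> fst a0" "fst a1 \<le> fst c" "- snd c \<le> snd b0" "snd b1 \<le> snd c"
    using ends_box by (simp_all add: in_box)
  then have "z \<in> closed_segment (- fst c, snd a0) a0 \<Longrightarrow> snd z = snd a0 \<and> fst z \<le> fst a0"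
    and "z \<in> closed_segment a1 (fst c, snd a1) \<Longrightarrow> snd z = snd a1 \<and> fst a1 \<le> fst z"
    and "z \<in> closed_segment (fst b0, - snd c) b0 \<Longrightarrow> fst z = fst b0 \<and> snd z \<le> snd b0"
    and "z \<in> closed_segment b1 (fst b1, snd c) \<Longrightarrow> fst z = fst b1 \<and> snd b1 \<le> snd z"
    using horizontal_segment[of z] vertical_segment[of z] by (fastforce simp: closed_segment_eq_real_ivl1)+
  then have rays_f: "z \<in> path_image A \<or> snd z = snd a0 \<and> fst z \<le> fst a0 \<or> snd z = snd a1 \<and> fst a1 \<le> fst z"
    and rays_g: "z \<in> path_image B \<or> fst z = fst b0 \<and> snd z \<le> snd b0 \<or> fst z = fst b1 \<and> snd b1 \<le> snd z"
    using zf zg unfolding image_f image_g by blast+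
  show False
    using rays_f rays_g disjoint assms(4,5,7,8) left right below above
    unfolding a0_a1_b0_b1_def by fastforce
qed

lemma near_swapping_graphs_paths_intersect:
  fixes A B :: "real \<Rightarrow> rpt"
  assumes "path A" "path B"
    and S1: "lipschitz_graph K S1" and S2: "lipschitz_graph K S2" and K: "0 \<le> K"
    and on_graphs: "pa1 \<in> S1" "p1 \<in> S1" "pa2 \<in> S2" "p2 \<in> S2"
    and fst_ends: "fst pa1 = a" "fst pa2 = a" "fst p1 = b" "fst p2 = b"
    and gaps: "(2 * K + 4) * \<epsilon> \<le> b - a" "(2 * K + 4) * \<epsilon> \<le> snd pa1 - snd pa2"
      "(2 * K + 4) * \<epsilon> \<le> snd p2 - snd p1"
    and near_A: "\<forall>z\<in>path_image A. \<exists>w\<in>S1. a \<le> fst w \<and> fst w \<le> b \<and> dist z w < \<epsilon>"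
    and near_B: "\<forall>z\<in>path_image B. \<exists>w\<in>S2. a \<le> fst w \<and> fst w \<le> b \<and> dist z w < \<epsilon>"
    and near_ends: "dist (pathstart A) pa1 < \<epsilon>" "dist (pathfinish A) p1 < \<epsilon>"
      "dist (pathstart B) pa2 < \<epsilon>" "dist (pathfinish B) p2 < \<epsilon>"
  shows "path_image A \<inter> path_image B \<noteq> {}"
proof (rule crossing_paths_intersect[OF assms(1,2)])
  have comp: "\<bar>fst z - fst w\<bar> < \<epsilon> \<and> \<bar>snd z - snd w\<bar> < \<epsilon>" if "dist z w < \<epsilon>" for z w :: rpt
    using that dist_fst_le[of z w] dist_snd_le[of z w] by (simp add: dist_real_def)
  note ends = near_ends[THEN comp, unfolded abs_less_iff]
  have "0 < \<epsilon>" using near_ends(1) zero_le_dist by (metis le_less_trans)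
  then have margin: "0 \<le> (2 * K + 1) * \<epsilon>" "(2 * K + 4) * \<epsilon> = (2 * K + 1) * \<epsilon> + 3 * \<epsilon>"
    using K by (simp_all add: algebra_simps)
  show "\<forall>q\<in>path_image B. fst q \<le> fst (pathstart A) \<longrightarrow> snd q < snd (pathstart A)"
  proof (intro ballI impI)
    fix q assume "q \<in> path_image B" "fst q \<le> fst (pathstart A)"
    then obtain w where w: "w \<in> S2" "a \<le> fst w" "dist q w < \<epsilon>" using near_B by blast
    then have "\<bar>fst q - fst pa2\<bar> < \<epsilon>"
      using comp[OF w(3)] ends \<open>fst q \<le> fst (pathstart A)\<close> fst_ends by (simp add: abs_less_iff)
    then have "\<bar>snd q - snd pa2\<bar> < (2 * K + 1) * \<epsilon>"
      by (rule lipschitz_graph_snd_near[OF S2 K w(1) on_graphs(3) w(3)])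
    then show "snd q < snd (pathstart A)" using ends gaps margin by (simp add: abs_less_iff)
  qed
  show "\<forall>q\<in>path_image B. fst (pathfinish A) \<le> fst q \<longrightarrow> snd (pathfinish A) < snd q"
  proof (intro ballI impI)
    fix q assume "q \<in> path_image B" "fst (pathfinish A) \<le> fst q"
    then obtain w where w: "w \<in> S2" "fst w \<le> b" "dist q w < \<epsilon>" using near_B by blast
    then have "\<bar>fst q - fst p2\<bar> < \<epsilon>"
      using comp[OF w(3)] ends \<open>fst (pathfinish A) \<le> fst q\<close> fst_ends by (simp add: abs_less_iff)
    then have "\<bar>snd q - snd p2\<bar> < (2 * K + 1) * \<epsilon>"
      by (rule lipschitz_graph_snd_near[OF S2 K w(1) on_graphs(4) w(3)])
    then show "snd (pathfinish A) < snd q" using ends gaps margin by (simp add: abs_less_iff)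
  qed
  show "\<forall>p\<in>path_image A. fst p = fst (pathstart B) \<longrightarrow> snd (pathstart B) < snd p"
  proof (intro ballI impI)
    fix p assume "p \<in> path_image A" "fst p = fst (pathstart B)"
    then obtain w where w: "w \<in> S1" "dist p w < \<epsilon>" using near_A by blast
    have "\<bar>fst p - fst pa1\<bar> < \<epsilon>"
      using ends \<open>fst p = fst (pathstart B)\<close> fst_ends by (simp add: abs_less_iff)
    then have "\<bar>snd p - snd pa1\<bar> < (2 * K + 1) * \<epsilon>"
      by (rule lipschitz_graph_snd_near[OF S1 K w(1) on_graphs(1) w(2)])
    then show "snd (pathstart B) < snd p" using ends gaps margin by (simp add: abs_less_iff)
  qed
  show "\<forall>p\<in>path_image A. fst p = fst (pathfinish B) \<longrightarrow> snd p < snd (pathfinish B)"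
  proof (intro ballI impI)
    fix p assume "p \<in> path_image A" "fst p = fst (pathfinish B)"
    then obtain w where w: "w \<in> S1" "dist p w < \<epsilon>" using near_A by blast
    have "\<bar>fst p - fst p1\<bar> < \<epsilon>"
      using ends \<open>fst p = fst (pathfinish B)\<close> fst_ends by (simp add: abs_less_iff)
    then have "\<bar>snd p - snd p1\<bar> < (2 * K + 1) * \<epsilon>"
      by (rule lipschitz_graph_snd_near[OF S1 K w(1) on_graphs(2) w(2)])
    then show "snd p < snd (pathfinish B)" using ends gaps margin by (simp add: abs_less_iff)
  qed
  show "snd (pathstart B) < snd (pathstart A)" "fst (pathstart A) < fst (pathfinish B)"
    "snd (pathfinish A) < snd (pathfinish B)" "fst (pathstart B) < fst (pathfinish A)"
    using ends gaps margin fst_ends by linarith+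
qed

section \<open>Subpaths of the tour\<close>

lemma tour_curve_periodic: "tour_curve ps (t + of_int k) = tour_curve ps t"
  by (simp add: tour_curve_def)

lemma tour_curve_on_leg:
  assumes "ps \<noteq> []" "0 \<le> s" "s \<le> 1"
  shows "tour_curve ps ((of_int m + s) / real (length ps)) =
    (1 - s) *\<^sub>R ps ! nat (m mod int (length ps)) + s *\<^sub>R ps ! nat ((m + 1) mod int (length ps))"
proof -
  define \<sigma> where "\<sigma> = length ps"
  have \<sigma>: "\<sigma> > 0" using assms(1) by (simp add: \<sigma>_def)
  have leg: "tour_curve ps ((of_int m + s) / real \<sigma>) =
      (1 - s) *\<^sub>R ps ! nat (m mod int \<sigma>) + s *\<^sub>R ps ! nat ((m + 1) mod int \<sigma>)"
    if "0 \<le> s" "s < 1" for m s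
  proof -
    define r where "r = m mod int \<sigma>"
    have r: "0 \<le> r" "r < int \<sigma>" using \<sigma> by (simp_all add: r_def)
    have "real_of_int m = of_int r + real \<sigma> * of_int (m div int \<sigma>)"
      unfolding r_def by (metis mod_mult_div_eq of_int_add of_int_mult of_int_of_nat_eq)
    then have "(of_int m + s) / real \<sigma> = (of_int r + s) / real \<sigma> + of_int (m div int \<sigma>)"
      using \<sigma> by (simp add: field_simps)
    then have "tour_curve ps ((of_int m + s) / real \<sigma>) = tour_curve ps ((of_int r + s) / real \<sigma>)"
      by (simp add: tour_curve_periodic)
    moreover have "frac ((of_int r + s) / real \<sigma>) * real \<sigma> = of_int r + s"
      using r that \<sigma> by (simp add: frac_eq divide_simps)
    moreover have "\<lfloor>of_int r + s\<rfloor> = r" using that by linarith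
    moreover have "(r + 1) mod int \<sigma> = (m + 1) mod int \<sigma>" by (simp add: r_def mod_add_left_eq)
    ultimately show ?thesis
      by (simp add: tour_curve_def Let_def cidx_def \<sigma>_def[symmetric] r_def[symmetric])
  qed
  show ?thesis
  proof (cases "s = 1")
    case True
    then show ?thesis using leg[of 0 "m + 1"] by (simp add: \<sigma>_def add.commute)
  next
    case False
    then show ?thesis using leg[of s m] assms by (simp add: \<sigma>_def)
  qed
qed

lemma leg_above_near_start:
  assumes "leg_above r u w" "fst r < fst u" "fst r < fst w" "fst r < b"
  obtains a pu pw where "fst r < a" "a < b" "pu \<in> closed_segment r u" "pw \<in> closed_segment r w"
    "fst pu = a" "fst pw = a" "snd pw < snd pu"
proof -
  define m where "m = min (min (fst u - fst r) (fst w - fst r)) (b - fst r)"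
  have "0 < m" "m \<le> fst u - fst r" "m \<le> fst w - fst r" "m \<le> b - fst r"
    using assms(2-4) by (auto simp: m_def)
  define a where "a = fst r + m / 2"
  have a: "fst r < a" "a < b" "a \<le> fst u" "a \<le> fst w"
    using \<open>0 < m\<close> \<open>m \<le> fst u - fst r\<close> \<open>m \<le> fst w - fst r\<close> \<open>m \<le> b - fst r\<close>
    unfolding a_def by linarith+
  have "a \<in> fst ` closed_segment r u" "a \<in> fst ` closed_segment r w"
    using a by (auto intro!: closed_segment_fst_covers)
  then obtain pu pw where pu: "pu \<in> closed_segment r u" "fst pu = a"
    and pw: "pw \<in> closed_segment r w" "fst pw = a"
    by (metis imageE)
  have "pu \<noteq> r" "pw \<noteq> r" using pu(2) pw(2) a(1) by auto
  then have "snd pw < snd pu" using assms(1) pu(1) pw(1) unfolding leg_above_def by auto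
  then show ?thesis by (rule that[OF a(1,2) pu(1) pw(1) pu(2) pw(2)])
qed

definition tour_dir :: "bool \<Rightarrow> int" where
  "tour_dir fwd = (if fwd then 1 else -1)"

definition tour_vertex :: "rpt list \<Rightarrow> nat \<Rightarrow> bool \<Rightarrow> nat \<Rightarrow> rpt" where
  "tour_vertex ps j fwd i = ps ! nat ((int j + tour_dir fwd * int i) mod int (length ps))"

text \<open>The subpath of the tour that leaves ps ! j in direction fwd, parametrised by the number
  of legs travelled, is tour_curve ps \<circ> tour_time ps j fwd.\<close>
definition tour_time :: "rpt list \<Rightarrow> nat \<Rightarrow> bool \<Rightarrow> real \<Rightarrow> real" where
  "tour_time ps j fwd \<tau> = (real j + of_int (tour_dir fwd) * \<tau>) / real (length ps)"

lemma length_tour_subpath: "length (tour_subpath ps j fwd k) = Suc k"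
  by (simp add: tour_subpath_def)

lemma nth_tour_subpath: "i \<le> k \<Longrightarrow> tour_subpath ps j fwd k ! i = tour_vertex ps j fwd i"
  by (simp add: tour_subpath_def tour_vertex_def tour_dir_def cidx_def nth_map less_Suc_eq_le
      del: upt_Suc)

lemma path_pts_tour_subpath:
  "path_pts (tour_subpath ps j fwd k) = polyline_points (tour_vertex ps j fwd) k"
  unfolding path_pts_def polyline_points_def length_tour_subpath
  by (rule SUP_cong) (auto simp: nth_tour_subpath)

lemma legs_on_line_tour_subpath:
  "legs_on_line (tour_subpath ps j fwd k) c =
    card {i. i < k \<and> (\<exists>p\<in>open_segment (tour_vertex ps j fwd i) (tour_vertex ps j fwd (Suc i)). fst p = c)}"
  unfolding legs_on_line_def length_tour_subpath
  by (intro arg_cong[where f = card]) (auto simp: nth_tour_subpath)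

lemma legs_on_line_le_shadow: "legs_on_line qs c \<le> shadow qs"
proof -
  have "legs_on_line qs c' \<le> length qs" for c'
    unfolding legs_on_line_def
    by (rule order_trans[OF card_mono[of "{..<length qs - 1}"]]) auto
  then have "finite (range (legs_on_line qs))"
    by (intro finite_subset[OF _ finite_atMost[of "length qs"]]) auto
  then show ?thesis unfolding shadow_def by simp
qed

lemma tour_curve_tour_time_on_leg:
  assumes "ps \<noteq> []" "0 \<le> s" "s \<le> 1"
  shows "tour_curve ps (tour_time ps j fwd (real i + s)) =
    (1 - s) *\<^sub>R tour_vertex ps j fwd i + s *\<^sub>R tour_vertex ps j fwd (Suc i)"
proof (cases fwd)
  case True
  then have "tour_time ps j fwd (real i + s) = (of_int (int j + int i) + s) / real (length ps)"
    by (simp add: tour_time_def tour_dir_def add.assoc)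
  then show ?thesis
    using tour_curve_on_leg[OF assms, of "int j + int i"] True
    by (simp add: tour_vertex_def tour_dir_def ac_simps)
next
  case False
  then have "tour_time ps j fwd (real i + s) = (of_int (int j - int i - 1) + (1 - s)) / real (length ps)"
    by (simp add: tour_time_def tour_dir_def)
  moreover have "tour_vertex ps j fwd i = ps ! nat ((int j - int i - 1 + 1) mod int (length ps))"
    "tour_vertex ps j fwd (Suc i) = ps ! nat ((int j - int i - 1) mod int (length ps))"
    using False by (simp_all add: tour_vertex_def tour_dir_def algebra_simps)
  moreover have "tour_curve ps ((of_int (int j - int i - 1) + (1 - s)) / real (length ps)) =
      (1 - (1 - s)) *\<^sub>R ps ! nat ((int j - int i - 1) mod int (length ps))
      + (1 - s) *\<^sub>R ps ! nat ((int j - int i - 1 + 1) mod int (length ps))"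
    by (rule tour_curve_on_leg) (use assms in auto)
  ultimately show ?thesis by (simp add: add.commute)
qed

lemma tour_curve_tour_time_reverse:
  assumes "ps \<noteq> []"
  shows "tour_curve ps (tour_time ps j fwd \<tau>) = tour_curve ps (tour_time ps j (\<not> fwd) (real (length ps) - \<tau>))"
proof -
  have "tour_time ps j (\<not> fwd) (real (length ps) - \<tau>) = tour_time ps j fwd \<tau> + of_int (- tour_dir fwd)"
    using assms by (cases fwd) (simp_all add: tour_time_def tour_dir_def field_simps)
  then show ?thesis by (simp only: tour_curve_periodic)
qed

lemma tour_vertex_0: "j < length ps \<Longrightarrow> tour_vertex ps j fwd 0 = ps ! j"
  by (simp add: tour_vertex_def)

lemma tour_vertex_1: "tour_vertex ps j fwd 1 = ps ! cidx (length ps) j (if fwd then 1 else -1)"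
  by (simp add: tour_vertex_def cidx_def tour_dir_def)

lemma OPT_leg_not_vertical:
  assumes vi: "valid_instance n base" and op: "is_OPT n base ps"
  shows "fst (ps ! nat (m mod int (length ps))) \<noteq> fst (ps ! nat ((m + 1) mod int (length ps)))"
proof
  assume same_x: "fst (ps ! nat (m mod int (length ps))) = fst (ps ! nat ((m + 1) mod int (length ps)))"
  have ne: "ps \<noteq> []" using op by (simp add: is_OPT_def is_tour_def)
  define i where "i = nat (m mod int (length ps))"
  have i: "i < length ps" "cidx (length ps) i 1 < length ps" using ne by (simp_all add: i_def cidx_def nat_less_iff)
  have next_i: "cidx (length ps) i 1 = nat ((m + 1) mod int (length ps))"
    using ne by (simp add: cidx_def i_def mod_add_left_eq)
  have on_segs: "\<forall>p\<in>set ps. \<exists>s<n. p \<in> seg base s" using op by (simp add: is_OPT_def is_tour_def)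
  obtain s1 s2 where s: "s1 < n" "ps ! i \<in> seg base s1" "s2 < n" "ps ! cidx (length ps) i 1 \<in> seg base s2"
    using on_segs i by (meson nth_mem)
  have fst_seg: "p \<in> seg base s \<Longrightarrow> fst p = fst (base s)" for p s
    unfolding seg_def by (auto simp: closed_segment_def algebra_simps)
  have "fst (base s1) = fst (base s2)" using fst_seg s same_x next_i by (simp add: i_def)
  then have "s1 = s2" using vi s unfolding valid_instance_def inj_on_def by auto
  then show False using op i s unfolding is_OPT_def by blast
qed

lemma tour_vertex_leg_not_vertical:
  assumes "valid_instance n base" "is_OPT n base ps"
  shows "fst (tour_vertex ps j fwd i) \<noteq> fst (tour_vertex ps j fwd (Suc i))"
proof (cases fwd)
  case True
  then show ?thesis
    using OPT_leg_not_vertical[OF assms, of "int j + int i"] by (simp add: tour_vertex_def tour_dir_def ac_simps)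
next
  case False
  have "tour_vertex ps j fwd i = ps ! nat ((int j - int i - 1 + 1) mod int (length ps))"
    "tour_vertex ps j fwd (Suc i) = ps ! nat ((int j - int i - 1) mod int (length ps))"
    using False by (simp_all add: tour_vertex_def tour_dir_def algebra_simps)
  then show ?thesis using OPT_leg_not_vertical[OF assms, of "int j - int i - 1"] by metis
qed

lemma tour_subpath_x_monotone:
  assumes vi: "valid_instance n base" and op: "is_OPT n base ps" and rr: "right_reflection ps j"
    and k: "1 \<le> k" and sh: "shadow (tour_subpath ps j fwd k) = 1"
  shows "parametrised_x_monotone_polyline (tour_vertex ps j fwd) k (tour_curve ps \<circ> tour_time ps j fwd)"
proof -
  have ne: "ps \<noteq> []" using op by (simp add: is_OPT_def is_tour_def)
  have jl: "j < length ps" using rr by (simp add: right_reflection_def)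
  have "fst (ps ! j) \<le> fst (tour_vertex ps j fwd 1)"
    using rr unfolding right_reflection_def tour_vertex_1 by (cases fwd) auto
  then have first: "fst (tour_vertex ps j fwd 0) < fst (tour_vertex ps j fwd 1)"
    using tour_vertex_leg_not_vertical[OF vi op, of j fwd 0] tour_vertex_0[OF jl] by force
  have "card {i. i < k \<and> (\<exists>p\<in>open_segment (tour_vertex ps j fwd i) (tour_vertex ps j fwd (Suc i)). fst p = c)} \<le> 1" for c
    using legs_on_line_le_shadow[of "tour_subpath ps j fwd k" c] sh by (simp add: legs_on_line_tour_subpath)
  then have "i < k \<Longrightarrow> fst (tour_vertex ps j fwd i) < fst (tour_vertex ps j fwd (Suc i))" for i
    by (rule single_crossing_polyline_fst_less[OF _ tour_vertex_leg_not_vertical[OF vi op] first])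
  then show ?thesis
    using k by unfold_locales (auto simp: tour_curve_tour_time_on_leg[OF ne])
qed

lemma periodic_inj_on_eq_imp_diff_Ints:
  fixes \<gamma> :: "real \<Rightarrow> 'a"
  assumes "\<And>t. \<gamma> (t + 1) = \<gamma> t" and "inj_on \<gamma> {0..<1}" and "\<gamma> t1 = \<gamma> t2"
  shows "t1 - t2 \<in> \<int>"
proof -
  interpret periodic_fun_simple' \<gamma> by standard (use assms(1) in simp)
  have "\<gamma> t = \<gamma> (frac t)" for t
    using plus_of_int[of "frac t" "\<lfloor>t\<rfloor>"] by (simp add: frac_def)
  then have "frac t1 = frac t2"
    using assms(2,3) frac_lt_1 frac_ge_0 by (metis atLeastLessThan_iff inj_on_def)
  then have "t1 - t2 = of_int (\<lfloor>t1\<rfloor> - \<lfloor>t2\<rfloor>)" by (simp add: frac_def)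
  then show ?thesis by simp
qed

lemma tour_time_collision:
  assumes "\<And>t. \<gamma> (t + 1) = \<gamma> t" "inj_on \<gamma> {0..<1}"
    and "\<gamma> (tour_time ps j fwd \<tau>1) = \<gamma> (tour_time ps j (\<not> fwd) \<tau>2)"
    and "0 < \<tau>1 + \<tau>2" "\<tau>1 + \<tau>2 \<le> real (length ps)"
  shows "\<tau>1 + \<tau>2 = real (length ps)"
proof -
  define u where "u = (\<tau>1 + \<tau>2) / real (length ps)"
  have \<sigma>: "0 < real (length ps)" using assms(4,5) by linarith
  have "tour_time ps j fwd \<tau>1 - tour_time ps j (\<not> fwd) \<tau>2 = of_int (tour_dir fwd) * u"
    by (cases fwd) (simp_all add: tour_time_def tour_dir_def u_def diff_divide_distrib add_divide_distrib)
  then have "of_int (tour_dir fwd) * u \<in> \<int>"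
    using periodic_inj_on_eq_imp_diff_Ints[OF assms(1-3)] by simp
  then have "u \<in> \<int>" by (cases fwd) (simp_all add: tour_dir_def)
  moreover have "0 < u" "u \<le> 1" using \<sigma> assms(4,5) by (simp_all add: u_def)
  ultimately have "u = 1" using Ints_nonzero_abs_ge1[of u] by simp
  then show ?thesis using \<sigma> by (simp add: u_def)
qed

lemma continuous_on_tour_time: "continuous_on S (tour_time ps j fwd)"
  unfolding tour_time_def divide_inverse by (intro continuous_intros)

lemma opposite_subarcs_disjoint:
  assumes "\<And>t. \<gamma> (t + 1) = \<gamma> t" "inj_on \<gamma> {0..<1}"
    and "0 < \<alpha>1" "\<beta>1 \<le> real k1" "0 < \<alpha>2" "\<beta>2 \<le> real k2" "k1 + k2 \<le> length ps"
    and ends_differ: "tour_curve ps (tour_time ps j fwd \<beta>1) \<noteq> tour_curve ps (tour_time ps j (\<not> fwd) \<beta>2)"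
  shows "(\<gamma> \<circ> tour_time ps j fwd) ` {\<alpha>1..\<beta>1} \<inter> (\<gamma> \<circ> tour_time ps j (\<not> fwd)) ` {\<alpha>2..\<beta>2} = {}"
proof (rule ccontr)
  assume "(\<gamma> \<circ> tour_time ps j fwd) ` {\<alpha>1..\<beta>1} \<inter> (\<gamma> \<circ> tour_time ps j (\<not> fwd)) ` {\<alpha>2..\<beta>2} \<noteq> {}"
  then obtain z where z: "z \<in> (\<gamma> \<circ> tour_time ps j fwd) ` {\<alpha>1..\<beta>1}" "z \<in> (\<gamma> \<circ> tour_time ps j (\<not> fwd)) ` {\<alpha>2..\<beta>2}"
    by blast
  obtain \<tau>1 \<tau>2 where \<tau>: "\<alpha>1 \<le> \<tau>1" "\<tau>1 \<le> \<beta>1" "\<alpha>2 \<le> \<tau>2" "\<tau>2 \<le> \<beta>2"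
    and "z = \<gamma> (tour_time ps j fwd \<tau>1)" "z = \<gamma> (tour_time ps j (\<not> fwd) \<tau>2)"
    using z by auto
  then have meet: "\<gamma> (tour_time ps j fwd \<tau>1) = \<gamma> (tour_time ps j (\<not> fwd) \<tau>2)" by simp
  have k12: "real k1 + real k2 \<le> real (length ps)" using assms(7) by linarith
  then have "0 < \<tau>1 + \<tau>2" "\<tau>1 + \<tau>2 \<le> real (length ps)" using \<tau> assms(3-6) by linarith+
  then have "\<tau>1 + \<tau>2 = real (length ps)" by (rule tour_time_collision[OF assms(1,2) meet])
  then have "\<beta>2 = real (length ps) - \<beta>1" "length ps \<noteq> 0"
    using \<tau> assms(3-6) k12 by linarith+
  then show False
    using ends_differ tour_curve_tour_time_reverse[of ps j fwd \<beta>1] by simp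
qed

text \<open>If the order swapped, the arcs of a simple closed curve close to the tour that shadow the
  two subpaths would swap their order too, and hence cross.\<close>
lemma opposite_subpaths_keep_order:
  fixes ps :: "rpt list" and j k1 k2 :: nat and fwd :: bool
  defines "S1 \<equiv> polyline_points (tour_vertex ps j fwd) k1"
    and "S2 \<equiv> polyline_points (tour_vertex ps j (\<not> fwd)) k2"
  assumes nsc: "not_self_crossing ps"
    and C1: "parametrised_x_monotone_polyline (tour_vertex ps j fwd) k1 (tour_curve ps \<circ> tour_time ps j fwd)"
    and C2: "parametrised_x_monotone_polyline (tour_vertex ps j (\<not> fwd)) k2 (tour_curve ps \<circ> tour_time ps j (\<not> fwd))"
    and k12: "k1 + k2 \<le> length ps"
    and pts: "pa1 \<in> S1" "p1 \<in> S1" "pa2 \<in> S2" "p2 \<in> S2"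
    and start: "fst (tour_vertex ps j fwd 0) < fst pa1" "fst (tour_vertex ps j (\<not> fwd) 0) < fst pa2"
    and fst_eq: "fst pa1 = fst pa2" "fst p1 = fst p2" and "fst pa1 < fst p1"
    and above: "snd pa2 < snd pa1"
  shows "snd p2 \<le> snd p1"
proof (rule ccontr)
  assume below: "\<not> snd p2 \<le> snd p1"
  interpret C1: parametrised_x_monotone_polyline "tour_vertex ps j fwd" k1 "tour_curve ps \<circ> tour_time ps j fwd"
    by (rule C1)
  interpret C2: parametrised_x_monotone_polyline "tour_vertex ps j (\<not> fwd)" k2 "tour_curve ps \<circ> tour_time ps j (\<not> fwd)"
    by (rule C2)
  define K where "K = max C1.slope_bound C2.slope_bound"
  have lip: "lipschitz_graph K S1" "lipschitz_graph K S2" and "0 \<le> K"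
    using lipschitz_graph_mono[OF C1.lipschitz_graph_points] lipschitz_graph_mono[OF C2.lipschitz_graph_points]
      C1.slope_bound_nonneg by (auto simp: K_def S1_def S2_def)
  define \<epsilon> where "\<epsilon> = min (min (fst p1 - fst pa1) (snd pa1 - snd pa2)) (snd p2 - snd p1) / (2 * K + 4)"
  have "0 < \<epsilon>" using \<open>0 \<le> K\<close> \<open>fst pa1 < fst p1\<close> above below by (simp add: \<epsilon>_def)
  have gaps: "(2 * K + 4) * \<epsilon> \<le> fst p1 - fst pa1" "(2 * K + 4) * \<epsilon> \<le> snd pa1 - snd pa2"
    "(2 * K + 4) * \<epsilon> \<le> snd p2 - snd p1"
    using \<open>0 \<le> K\<close> by (simp_all add: \<epsilon>_def)
  obtain \<gamma> :: "real \<Rightarrow> rpt" where \<gamma>: "continuous_on UNIV \<gamma>" "\<And>t. \<gamma> (t + 1) = \<gamma> t"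
    "inj_on \<gamma> {0..<1}" "\<And>t. dist (\<gamma> t) (tour_curve ps t) < \<epsilon>"
    using nsc \<open>0 < \<epsilon>\<close> unfolding not_self_crossing_def by blast
  define T1 T2 where "T1 = tour_time ps j fwd" and "T2 = tour_time ps j (\<not> fwd)"
  obtain \<alpha>1 \<beta>1 where arc1: "0 < \<alpha>1" "\<alpha>1 < \<beta>1" "\<beta>1 \<le> real k1" "tour_curve ps (T1 \<beta>1) = p1"
    and A: "path (\<gamma> \<circ> T1 \<circ> linepath \<alpha>1 \<beta>1)" "path_image (\<gamma> \<circ> T1 \<circ> linepath \<alpha>1 \<beta>1) = (\<gamma> \<circ> T1) ` {\<alpha>1..\<beta>1}"
      "\<forall>z\<in>path_image (\<gamma> \<circ> T1 \<circ> linepath \<alpha>1 \<beta>1). \<exists>w\<in>S1. fst pa1 \<le> fst w \<and> fst w \<le> fst p1 \<and> dist z w < \<epsilon>"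
      "dist (pathstart (\<gamma> \<circ> T1 \<circ> linepath \<alpha>1 \<beta>1)) pa1 < \<epsilon>" "dist (pathfinish (\<gamma> \<circ> T1 \<circ> linepath \<alpha>1 \<beta>1)) p1 < \<epsilon>"
    unfolding S1_def T1_def
    by (rule C1.shadowing_subarc[OF refl continuous_on_tour_time \<gamma>(1,4) pts(1,2)[unfolded S1_def] start(1)
          \<open>fst pa1 < fst p1\<close>])
  obtain \<alpha>2 \<beta>2 where arc2: "0 < \<alpha>2" "\<alpha>2 < \<beta>2" "\<beta>2 \<le> real k2" "tour_curve ps (T2 \<beta>2) = p2"
    and B: "path (\<gamma> \<circ> T2 \<circ> linepath \<alpha>2 \<beta>2)" "path_image (\<gamma> \<circ> T2 \<circ> linepath \<alpha>2 \<beta>2) = (\<gamma> \<circ> T2) ` {\<alpha>2..\<beta>2}"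
      "\<forall>z\<in>path_image (\<gamma> \<circ> T2 \<circ> linepath \<alpha>2 \<beta>2). \<exists>w\<in>S2. fst pa2 \<le> fst w \<and> fst w \<le> fst p2 \<and> dist z w < \<epsilon>"
      "dist (pathstart (\<gamma> \<circ> T2 \<circ> linepath \<alpha>2 \<beta>2)) pa2 < \<epsilon>" "dist (pathfinish (\<gamma> \<circ> T2 \<circ> linepath \<alpha>2 \<beta>2)) p2 < \<epsilon>"
    unfolding S2_def T2_def
    by (rule C2.shadowing_subarc[OF refl continuous_on_tour_time \<gamma>(1,4) pts(3,4)[unfolded S2_def] start(2)])
      (use fst_eq \<open>fst pa1 < fst p1\<close> in simp)
  have "path_image (\<gamma> \<circ> T1 \<circ> linepath \<alpha>1 \<beta>1) \<inter> path_image (\<gamma> \<circ> T2 \<circ> linepath \<alpha>2 \<beta>2) \<noteq> {}"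
    by (rule near_swapping_graphs_paths_intersect[OF A(1) B(1) lip \<open>0 \<le> K\<close> pts _ _ _ _ gaps A(3)
          B(3)[unfolded fst_eq[symmetric]] A(4,5) B(4,5)]) (use fst_eq in simp_all)
  moreover have "tour_curve ps (T1 \<beta>1) \<noteq> tour_curve ps (T2 \<beta>2)"
    using arc1(4) arc2(4) below by auto
  then have "path_image (\<gamma> \<circ> T1 \<circ> linepath \<alpha>1 \<beta>1) \<inter> path_image (\<gamma> \<circ> T2 \<circ> linepath \<alpha>2 \<beta>2) = {}"
    unfolding A(2) B(2) unfolding T1_def T2_def
    by (rule opposite_subarcs_disjoint[OF \<gamma>(2,3) arc1(1,3) arc2(1,3) k12])
  ultimately show False by blast
qed

lemma tour_subpaths_no_swap:
  assumes vi: "valid_instance n base" and op: "is_OPT n base ps" and rr: "right_reflection ps j"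
    and la: "leg_above (ps ! j)
           (ps ! cidx (length ps) j (if fwd then 1 else -1))
           (ps ! cidx (length ps) j (if fwd then -1 else 1))"
    and k1: "1 \<le> k1" "k1 \<le> length ps" and k2: "1 \<le> k2" "k2 \<le> length ps"
    and sh1: "shadow (tour_subpath ps j fwd k1) = 1"
    and sh2: "shadow (tour_subpath ps j (\<not> fwd) k2) = 1"
    and p1: "p1 \<in> polyline_points (tour_vertex ps j fwd) k1"
    and p2: "p2 \<in> polyline_points (tour_vertex ps j (\<not> fwd)) k2"
    and same_x: "fst p1 = fst p2"
  shows "snd p2 \<le> snd p1"
proof -
  note C1 = tour_subpath_x_monotone[OF vi op rr k1(1) sh1]
  note C2 = tour_subpath_x_monotone[OF vi op rr k2(1) sh2]
  interpret C1: parametrised_x_monotone_polyline "tour_vertex ps j fwd" k1 "tour_curve ps \<circ> tour_time ps j fwd"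
    by (rule C1)
  interpret C2: parametrised_x_monotone_polyline "tour_vertex ps j (\<not> fwd)" k2 "tour_curve ps \<circ> tour_time ps j (\<not> fwd)"
    by (rule C2)
  have ne: "ps \<noteq> []" using op by (simp add: is_OPT_def is_tour_def)
  have k12: "k1 + k2 \<le> length ps"
    by (rule opposite_parametrisations_length_le[OF C1 C2 _ k1(2) k2(2)])
      (simp add: tour_curve_tour_time_reverse[OF ne, of j fwd])
  have r: "tour_vertex ps j fwd 0 = ps ! j" "tour_vertex ps j (\<not> fwd) 0 = ps ! j"
    using rr tour_vertex_0 by (simp_all add: right_reflection_def)
  have first_legs: "tour_vertex ps j fwd 1 = ps ! cidx (length ps) j (if fwd then 1 else -1)"
    "tour_vertex ps j (\<not> fwd) 1 = ps ! cidx (length ps) j (if fwd then -1 else 1)"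
    by (cases fwd; simp add: tour_vertex_def cidx_def tour_dir_def)+
  have r_in: "ps ! j \<in> polyline_points (tour_vertex ps j fwd) k1" "ps ! j \<in> polyline_points (tour_vertex ps j (\<not> fwd)) k2"
    using C1.first_leg_subset_points C2.first_leg_subset_points r by auto
  show ?thesis
  proof (cases "fst p1 = fst (ps ! j)")
    case True
    then have "p1 = ps ! j" "p2 = ps ! j"
      using C1.inj_on_fst_points C2.inj_on_fst_points p1 p2 r_in same_x by (auto dest: inj_onD)
    then show ?thesis by simp
  next
    case False
    then have right: "fst (ps ! j) < fst p1" using C1.fst_points_bounds[OF p1] r(1) by force
    have up: "fst (ps ! j) < fst (tour_vertex ps j fwd 1)" "fst (ps ! j) < fst (tour_vertex ps j (\<not> fwd) 1)"
      using C1.fst_less[of 0] C2.fst_less[of 0] k1 k2 r by auto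
    obtain a pa1 pa2 where "fst (ps ! j) < a" "a < fst p1"
      and pa1: "pa1 \<in> closed_segment (ps ! j) (tour_vertex ps j fwd 1)"
      and pa2: "pa2 \<in> closed_segment (ps ! j) (tour_vertex ps j (\<not> fwd) 1)"
      and "fst pa1 = a" "fst pa2 = a" "snd pa2 < snd pa1"
      by (rule leg_above_near_start[OF la[folded first_legs] up right])
    have pa1_in: "pa1 \<in> polyline_points (tour_vertex ps j fwd) k1"
      and pa2_in: "pa2 \<in> polyline_points (tour_vertex ps j (\<not> fwd)) k2"
      using C1.first_leg_subset_points C2.first_leg_subset_points r pa1 pa2 by auto
    have "not_self_crossing ps" using op by (simp add: is_OPT_def)
    then show ?thesis
      by (rule opposite_subpaths_keep_order[OF _ C1 C2 k12 pa1_in p1 pa2_in p2])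
        (use r same_x \<open>fst (ps ! j) < a\<close> \<open>a < fst p1\<close> \<open>fst pa1 = a\<close> \<open>fst pa2 = a\<close>
          \<open>snd pa2 < snd pa1\<close> in simp_all)
  qed
qed

theorem lemma5:
  fixes n :: nat and base :: "nat \<Rightarrow> rpt" and ps :: "rpt list"
    and j k1 k2 :: nat and fwd :: bool and c :: real
  assumes "valid_instance n base"
    and "is_OPT n base ps"
    and "right_reflection ps j"
    and "leg_above (ps ! j)
           (ps ! cidx (length ps) j (if fwd then 1 else -1))
           (ps ! cidx (length ps) j (if fwd then -1 else 1))"
    and "1 \<le> k1" and "k1 \<le> length ps" and "1 \<le> k2" and "k2 \<le> length ps"
    and "shadow (tour_subpath ps j fwd k1) = 1"
    and "shadow (tour_subpath ps j (\<not> fwd) k2) = 1"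
    and "c > fst (ps ! j)"
    and "\<exists>p \<in> path_pts (tour_subpath ps j fwd k1). fst p = c"
    and "\<exists>p \<in> path_pts (tour_subpath ps j (\<not> fwd) k2). fst p = c"
  shows "path_above (tour_subpath ps j fwd k1) (tour_subpath ps j (\<not> fwd) k2) (fst (ps ! j)) c"
proof -
  define S1 S2 where "S1 = polyline_points (tour_vertex ps j fwd) k1"
    and "S2 = polyline_points (tour_vertex ps j (\<not> fwd)) k2"
  interpret C1: parametrised_x_monotone_polyline "tour_vertex ps j fwd" k1 "tour_curve ps \<circ> tour_time ps j fwd"
    by (rule tour_subpath_x_monotone[OF assms(1-3,5,9)])
  have "c \<in> fst ` S1" using assms(12) by (auto simp: S1_def path_pts_tour_subpath)
  then have covered: "{fst (ps ! j)..c} \<subseteq> fst ` S1"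
    using C1.fst_image_points tour_vertex_0 assms(3) by (auto simp: S1_def right_reflection_def)
  have "\<exists>p\<in>S1. fst p = x \<and> (\<forall>q\<in>S1 \<union> S2. fst q = x \<longrightarrow> snd q \<le> snd p)"
    if x: "x \<in> {fst (ps ! j)..c}" for x
  proof -
    obtain p where p: "p \<in> S1" "fst p = x" using covered x by auto
    have "snd q \<le> snd p" if q: "q \<in> S1 \<union> S2" "fst q = x" for q
    proof (cases "q \<in> S1")
      case True
      then have "q = p" using C1.inj_on_fst_points p q(2) by (auto simp: S1_def dest: inj_onD)
      then show ?thesis by simp
    next
      case False
      then have "q \<in> S2" using q(1) by blast
      then show ?thesis
        using tour_subpaths_no_swap[OF assms(1-10), of p q] p q(2) by (simp add: S1_def S2_def)
    qed
    then show ?thesis using p by blast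
  qed
  then show ?thesis unfolding path_above_def path_pts_tour_subpath S1_def S2_def by blast
qed

end
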